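(* Let $\mathcal S,\mathcal W,\mathcal Z$ be measurable spaces and let $S,W,Z$ be the coordinate projections from $\mathcal S\times\mathcal W\times\mathcal Z$ onto $\mathcal S,\mathcal W,\mathcal Z$. Then the set $\{\pi\in\mathcal P(\mathcal S\times\mathcal W\times\mathcal Z): S\perp\!\!\!\perp_Z W \text{ under }\pi\}$ is closed under convergence in total variation, where $\mathcal P(\mathcal S\times\mathcal W\times\mathcal Z)$ is the set of probability measures on the product $\sigma$-algebra.
   Context: $S\perp\!\!\!\perp_Z W$ under $\pi$ means $\pi[S\in A,W\in B\mid Z]=\pi[S\in A\mid Z]\,\pi[W\in B\mid Z]$ $\pi$-a.s. for all measurable $A\subseteq\mathcal S$, $B\subseteq\mathcal W$ (equivalently $\pi[S\in A\mid W,Z]=\pi[S\in A\mid Z]$ $\pi$-a.s. for all measurable $A$). Convergence in total variation means $\sup_{C}|\pi^k(C)-\pi(C)|\to0$ over measurable sets $C$. *)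

theory Defs
  imports "HOL-Probability.Probability"
begin

definition cond_prob :: "'a measure \<Rightarrow> 'a measure \<Rightarrow> 'a set \<Rightarrow> 'a \<Rightarrow> real" where
  "cond_prob M F E = real_cond_exp M F (indicator E)"

definition cond_indep ::
  "'a measure \<Rightarrow> ('a \<Rightarrow> 'b) \<Rightarrow> 'b measure \<Rightarrow> ('a \<Rightarrow> 'c) \<Rightarrow> 'c measure
     \<Rightarrow> ('a \<Rightarrow> 'd) \<Rightarrow> 'd measure \<Rightarrow> bool" where
  "cond_indep M S Ms W Mw Z Mz \<longleftrightarrow>
     (\<forall>A\<in>sets Ms. \<forall>B\<in>sets Mw.
        AE x in M.
          cond_prob M (vimage_algebra (space M) Z Mz)
              (S -` A \<inter> W -` B \<inter> space M) x
          = cond_prob M (vimage_algebra (space M) Z Mz) (S -` A \<inter> space M) x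
            * cond_prob M (vimage_algebra (space M) Z Mz) (W -` B \<inter> space M) x)"

definition prob_measures :: "'a measure \<Rightarrow> 'a measure set" where
  "prob_measures \<Omega> = {P. sets P = sets \<Omega> \<and> prob_space P}"

definition tv_converges :: "(nat \<Rightarrow> 'a measure) \<Rightarrow> 'a measure \<Rightarrow> bool" where
  "tv_converges P Q \<longleftrightarrow>
     (\<lambda>n. SUP C\<in>sets Q. \<bar>measure (P n) C - measure Q C\<bar>) \<longlonglongrightarrow> 0"

end

theory Submission
  imports Defs
begin

text \<open>Conditional independence of \<open>S\<close> and \<open>W\<close> given \<open>Z\<close> says that the \<open>L\<^sup>1\<close> defect
  \<open>\<integral>|\<pi>[X\<^sub>3|Z] - \<pi>[X\<^sub>1|Z] \<pi>[X\<^sub>2|Z]| d\<pi>\<close> vanishes for all events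
  \<open>X\<^sub>1 = {S \<in> A}\<close>, \<open>X\<^sub>2 = {W \<in> B}\<close>, \<open>X\<^sub>3 = X\<^sub>1 \<inter> X\<^sub>2\<close>.
  If \<open>|P C - Q C| \<le> d\<close> for all events, then integrals of \<open>[0,1]\<close>-valued functions under \<open>P\<close> and \<open>Q\<close>
  differ by at most \<open>d\<close> (approximate them by sums of indicators of level sets), and hence
  \<open>[0,1]\<close>-valued versions of \<open>P[X|Z]\<close> and \<open>Q[X|Z]\<close> are \<open>4d\<close>-close in \<open>L\<^sup>1(Q)\<close>: integrated over a
  \<open>Z\<close>-measurable set \<open>E\<close> both give the probability of \<open>E \<inter> X\<close> under their own measure.
  So the defect under \<open>Q\<close> is at most \<open>13 d\<close>, and it vanishes in the total variation limit.\<close>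

lemma of_int_floor_eq_count:
  fixes y :: real and k :: nat
  assumes "0 \<le> y" "y \<le> real k"
  shows "of_int \<lfloor>y\<rfloor> = (\<Sum>j=1..k. if real j \<le> y then 1 else 0 :: real)"
proof -
  have "{j\<in>{1..k}. real j \<le> y} = {1..nat \<lfloor>y\<rfloor>}"
    using assms by (auto simp: le_nat_iff le_floor_iff nat_le_iff floor_le_iff)
  then have "(\<Sum>j=1..k. if real j \<le> y then 1 else 0 :: real) = real (nat \<lfloor>y\<rfloor>)"
    by (simp add: sum.If_cases Int_def conj_commute)
  then show ?thesis using assms by simp
qed

lemma integral_level_sets_approx:
  fixes g :: "'a \<Rightarrow> real" and k :: nat
  assumes M: "prob_space M" and g[measurable]: "g \<in> borel_measurable M"
    and g01: "\<And>x. x \<in> space M \<Longrightarrow> 0 \<le> g x \<and> g x \<le> 1" and k: "0 < k"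
  shows "\<bar>(\<integral>x. g x \<partial>M) - (\<Sum>j=1..k. measure M {x\<in>space M. real j \<le> real k * g x}) / real k\<bar>
           \<le> 1 / real k"
proof -
  interpret prob_space M by fact
  define s where "s x = of_int \<lfloor>real k * g x\<rfloor> / real k" for x
  have s_sum: "s x = (\<Sum>j=1..k. indicator {x\<in>space M. real j \<le> real k * g x} x) / real k"
    if "x \<in> space M" for x
  proof -
    have kg: "0 \<le> real k * g x" "real k * g x \<le> real k"
      using g01[OF that] by (auto intro: mult_left_le)
    then show ?thesis
      unfolding s_def of_int_floor_eq_count[OF kg] using that
      by (intro arg_cong[where f="\<lambda>t. t / real k"] sum.cong) (auto simp: indicator_def)
  qed
  have "(\<integral>x. s x \<partial>M) = (\<integral>x. (\<Sum>j=1..k. indicator {x\<in>space M. real j \<le> real k * g x} x) / real k \<partial>M)"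
    using s_sum by (intro Bochner_Integration.integral_cong) auto
  also have "\<dots> = (\<Sum>j=1..k. measure M {x\<in>space M. real j \<le> real k * g x}) / real k"
    by (simp add: emeasure_eq_measure)
  finally have int_s: "(\<integral>x. s x \<partial>M) = \<dots>" .
  have s_le: "s x \<le> g x" "g x - 1 / real k \<le> s x" for x
  proof -
    have "of_int \<lfloor>real k * g x\<rfloor> / real k \<le> real k * g x / real k"
      by (intro divide_right_mono) simp_all
    then show "s x \<le> g x" using k by (simp add: s_def)
    have "(real k * g x - 1) / real k \<le> of_int \<lfloor>real k * g x\<rfloor> / real k"
      by (intro divide_right_mono) linarith+
    then show "g x - 1 / real k \<le> s x" using k by (simp add: s_def diff_divide_distrib)
  qed
  have "s \<in> borel_measurable M" unfolding s_def by measurable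
  moreover have "\<bar>s x\<bar> \<le> 1" if "x \<in> space M" for x
  proof -
    have "1 / real k \<le> 1" using k by simp
    then show ?thesis using s_le[of x] g01[OF that] by (simp add: abs_le_iff)
  qed
  ultimately have int_s': "integrable M s" by (intro integrable_const_bound[where B=1]) auto
  have int_g: "integrable M g" using g01 by (intro integrable_const_bound[where B=1]) auto
  have "0 \<le> (\<integral>x. g x - s x \<partial>M)"
    using s_le by (intro integral_nonneg_AE AE_I2) simp
  moreover have "(\<integral>x. g x - s x \<partial>M) \<le> (\<integral>x. 1 / real k \<partial>M)"
    using int_g int_s' s_le(2) by (intro integral_mono) (auto simp: diff_le_eq add.commute)
  ultimately show ?thesis
    using int_g int_s' int_s by (simp add: prob_space)
qed

lemma integral_diff_le_of_measure_diff_le: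
  fixes g :: "'a \<Rightarrow> real"
  assumes P: "prob_space P" and Q: "prob_space Q" and sets_eq: "sets P = sets Q"
    and g[measurable]: "g \<in> borel_measurable Q"
    and g01: "\<And>x. x \<in> space Q \<Longrightarrow> 0 \<le> g x \<and> g x \<le> 1"
    and d: "\<And>C. C \<in> sets Q \<Longrightarrow> \<bar>measure P C - measure Q C\<bar> \<le> d"
  shows "\<bar>(\<integral>x. g x \<partial>P) - (\<integral>x. g x \<partial>Q)\<bar> \<le> d"
proof (rule field_le_epsilon)
  fix e :: real assume "0 < e"
  obtain k :: nat where k: "2 / e < real k" using reals_Archimedean2 by blast
  have "0 < 2 / e" using \<open>0 < e\<close> by simp
  then have "0 < real k" using k by linarith
  then have "0 < k" and "2 / real k < e"
    using k \<open>0 < e\<close> by (simp_all add: divide_less_eq mult.commute)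
  have space_eq: "space P = space Q" using sets_eq by (rule sets_eq_imp_space_eq)
  have gP: "g \<in> borel_measurable P" using g by (simp add: measurable_cong_sets[OF sets_eq refl])
  define L where "L j = {x\<in>space Q. real j \<le> real k * g x}" for j :: nat
  have L: "L j \<in> sets Q" for j unfolding L_def by measurable
  have "\<bar>(\<Sum>j=1..k. measure P (L j)) / real k - (\<Sum>j=1..k. measure Q (L j)) / real k\<bar>
          = \<bar>\<Sum>j=1..k. measure P (L j) - measure Q (L j)\<bar> / real k"
    by (simp add: sum_subtractf flip: diff_divide_distrib)
  also have "\<dots> \<le> (\<Sum>j=1..k. \<bar>measure P (L j) - measure Q (L j)\<bar>) / real k"
    by (intro divide_right_mono sum_abs) simp
  also have "\<dots> \<le> (\<Sum>j=1..k. d) / real k"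
    by (intro divide_right_mono sum_mono d L) simp
  also have "\<dots> = d" using \<open>0 < k\<close> by simp
  finally have "\<bar>(\<Sum>j=1..k. measure P (L j)) / real k - (\<Sum>j=1..k. measure Q (L j)) / real k\<bar> \<le> d" .
  moreover have "\<bar>(\<integral>x. g x \<partial>P) - (\<Sum>j=1..k. measure P (L j)) / real k\<bar> \<le> 1 / real k"
    using integral_level_sets_approx[OF P gP _ \<open>0 < k\<close>] g01 by (simp add: L_def space_eq)
  moreover have "\<bar>(\<integral>x. g x \<partial>Q) - (\<Sum>j=1..k. measure Q (L j)) / real k\<bar> \<le> 1 / real k"
    using integral_level_sets_approx[OF Q g g01 \<open>0 < k\<close>] by (simp add: L_def)
  ultimately show "\<bar>(\<integral>x. g x \<partial>P) - (\<integral>x. g x \<partial>Q)\<bar> \<le> d + e"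
    using \<open>2 / real k < e\<close> by linarith
qed

lemma subalgebra_cong_sets: "sets M = sets N \<Longrightarrow> subalgebra N F \<Longrightarrow> subalgebra M F"
  unfolding subalgebra_def by (metis sets_eq_imp_space_eq)

text \<open>\<open>cond_prob\<close> lies in \<open>[0,1]\<close> only almost surely; clamping yields an \<open>F\<close>-measurable version
  that is bounded everywhere.\<close>

definition cond_prob01 :: "'a measure \<Rightarrow> 'a measure \<Rightarrow> 'a set \<Rightarrow> 'a \<Rightarrow> real" where
  "cond_prob01 M F X x = max 0 (min 1 (cond_prob M F X x))"

lemma cond_prob01_bounds [simp]: "0 \<le> cond_prob01 M F X x" "cond_prob01 M F X x \<le> 1"
  by (simp_all add: cond_prob01_def)

lemma borel_measurable_cond_prob01 [measurable]: "cond_prob01 M F X \<in> borel_measurable F"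
  unfolding cond_prob01_def cond_prob_def by measurable

lemma AE_cond_prob01_eq:
  assumes "prob_space M" "subalgebra M F" "X \<in> sets M"
  shows "AE x in M. cond_prob01 M F X x = cond_prob M F X x"
proof -
  interpret prob_space M by fact
  interpret finite_measure_subalgebra M F by unfold_locales (fact)
  have X: "integrable M (indicator X :: _ \<Rightarrow> real)" "indicator X \<in> borel_measurable M"
    using \<open>X \<in> sets M\<close> by (simp_all add: integrable_indicator_iff emeasure_eq_measure)
  have "AE x in M. 0 \<le> cond_prob M F X x"
    unfolding cond_prob_def by (rule real_cond_exp_pos) (use X in auto)
  moreover have "AE x in M. cond_prob M F X x \<le> 1"
    unfolding cond_prob_def by (rule real_cond_exp_le_c) (use X in \<open>auto simp: indicator_def\<close>)
  ultimately show ?thesis by eventually_elim (simp add: cond_prob01_def)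
qed

lemma integral_indicator_times_cond_prob01:
  assumes M: "prob_space M" and F: "subalgebra M F" and X: "X \<in> sets M" and D: "D \<in> sets F"
  shows "(\<integral>x. indicator D x * cond_prob01 M F X x \<partial>M) = measure M (D \<inter> X)"
proof -
  interpret prob_space M by fact
  interpret finite_measure_subalgebra M F by unfold_locales (fact)
  have DM: "D \<in> sets M" using D F by (auto simp: subalgebra_def)
  have DX: "(\<lambda>x. indicator D x * indicator X x :: real) = indicator (D \<inter> X)"
    by (auto simp: indicator_def)
  have "(\<integral>x. indicator D x * cond_prob01 M F X x \<partial>M)
          = (\<integral>x. indicator D x * real_cond_exp M F (indicator X) x \<partial>M)"
  proof (rule integral_cong_AE)
    have [measurable]: "cond_prob01 M F X \<in> borel_measurable M"
      by (rule measurable_from_subalg[OF F]) simp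
    show "(\<lambda>x. indicator D x * cond_prob01 M F X x) \<in> borel_measurable M"
         "(\<lambda>x. indicator D x * real_cond_exp M F (indicator X) x) \<in> borel_measurable M"
      using DM by measurable
    show "AE x in M. indicator D x * cond_prob01 M F X x = indicator D x * real_cond_exp M F (indicator X) x"
      using AE_cond_prob01_eq[OF M F X] by eventually_elim (simp add: cond_prob_def)
  qed
  also have "\<dots> = (\<integral>x. indicator D x * indicator X x \<partial>M)"
    using D X DM by (intro real_cond_exp_intg(2)) (simp_all add: DX integrable_indicator_iff emeasure_eq_measure)
  finally show ?thesis using DM X by (simp add: DX)
qed

lemma integral_indicator_times_cond_prob01_diff_le:
  assumes P: "prob_space P" and Q: "prob_space Q" and sets_eq: "sets P = sets Q"
    and F: "subalgebra Q F" and X: "X \<in> sets Q" and E: "E \<in> sets F"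
    and d: "\<And>C. C \<in> sets Q \<Longrightarrow> \<bar>measure P C - measure Q C\<bar> \<le> d"
  shows "\<bar>\<integral>x. indicator E x * (cond_prob01 P F X x - cond_prob01 Q F X x) \<partial>Q\<bar> \<le> 2 * d"
proof -
  interpret Q: prob_space Q by fact
  define g where "g = cond_prob01 P F X"
  define h where "h = cond_prob01 Q F X"
  have EQ: "E \<in> sets Q" using E F by (auto simp: subalgebra_def)
  have [measurable]: "g \<in> borel_measurable Q" "h \<in> borel_measurable Q"
    unfolding g_def h_def by (simp_all add: measurable_from_subalg[OF F])
  have int: "integrable Q (\<lambda>x. indicator E x * f x)"
    if "f \<in> borel_measurable Q" "\<And>x. \<bar>f x\<bar> \<le> 1" for f :: "_ \<Rightarrow> real"
    using that EQ by (intro Q.integrable_const_bound[where B=1] AE_I2) (auto simp: indicator_def)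
  have "(\<lambda>x. indicator E x * g x) \<in> borel_measurable Q" using EQ by measurable
  then have "\<bar>(\<integral>x. indicator E x * g x \<partial>P) - (\<integral>x. indicator E x * g x \<partial>Q)\<bar> \<le> d"
    by (intro integral_diff_le_of_measure_diff_le[OF P Q sets_eq _ _ d]) (auto simp: indicator_def g_def)
  moreover have "(\<integral>x. indicator E x * g x \<partial>P) = measure P (E \<inter> X)"
    unfolding g_def using X sets_eq
    by (intro integral_indicator_times_cond_prob01[OF P subalgebra_cong_sets[OF sets_eq F] _ E]) simp
  moreover have "(\<integral>x. indicator E x * h x \<partial>Q) = measure Q (E \<inter> X)"
    unfolding h_def by (rule integral_indicator_times_cond_prob01[OF Q F X E])
  moreover have "\<bar>measure P (E \<inter> X) - measure Q (E \<inter> X)\<bar> \<le> d"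
    using EQ X by (intro d) simp
  moreover have "\<bar>g x\<bar> \<le> 1" "\<bar>h x\<bar> \<le> 1" for x
    by (simp_all add: g_def h_def)
  then have "(\<integral>x. indicator E x * (g x - h x) \<partial>Q)
               = (\<integral>x. indicator E x * g x \<partial>Q) - (\<integral>x. indicator E x * h x \<partial>Q)"
    using int by (simp add: right_diff_distrib Bochner_Integration.integral_diff)
  ultimately show ?thesis by (simp add: g_def h_def)
qed

lemma integral_abs_cond_prob01_diff_le:
  assumes P: "prob_space P" and Q: "prob_space Q" and sets_eq: "sets P = sets Q"
    and F: "subalgebra Q F" and X: "X \<in> sets Q"
    and d: "\<And>C. C \<in> sets Q \<Longrightarrow> \<bar>measure P C - measure Q C\<bar> \<le> d"
  shows "(\<integral>x. \<bar>cond_prob01 P F X x - cond_prob01 Q F X x\<bar> \<partial>Q) \<le> 4 * d"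
proof -
  interpret Q: prob_space Q by fact
  define g where "g = cond_prob01 P F X"
  define h where "h = cond_prob01 Q F X"
  have space_F: "space F = space Q" using F by (simp add: subalgebra_def)
  \<comment> \<open>\<open>D\<close> is \<open>F\<close>-measurable, so the previous lemma applies to \<open>D\<close> and to its complement.\<close>
  define D where "D = {x\<in>space Q. h x \<le> g x}"
  have "D \<in> sets F" unfolding D_def g_def h_def space_F[symmetric] by measurable
  then have D: "D \<in> sets F" "space Q - D \<in> sets F" using space_F by (metis sets.compl_sets)+
  then have DQ: "D \<in> sets Q" "space Q - D \<in> sets Q" using F by (auto simp: subalgebra_def)
  have [measurable]: "g \<in> borel_measurable Q" "h \<in> borel_measurable Q"
    unfolding g_def h_def by (simp_all add: measurable_from_subalg[OF F])
  have "\<bar>g x - h x\<bar> \<le> 1" for x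
    unfolding g_def h_def using cond_prob01_bounds[of P F X x] cond_prob01_bounds[of Q F X x]
    by linarith
  then have "\<bar>indicator E x * (g x - h x)\<bar> \<le> (1::real)" for E x
    by (simp add: indicator_def)
  then have int: "integrable Q (\<lambda>x. indicator E x * (g x - h x))" if "E \<in> sets Q" for E
    using that by (intro Q.integrable_const_bound[where B=1] AE_I2) auto
  have "(\<integral>x. \<bar>g x - h x\<bar> \<partial>Q)
          = (\<integral>x. indicator D x * (g x - h x) - indicator (space Q - D) x * (g x - h x) \<partial>Q)"
    by (intro Bochner_Integration.integral_cong) (auto simp: D_def indicator_def)
  also have "\<dots> = (\<integral>x. indicator D x * (g x - h x) \<partial>Q) - (\<integral>x. indicator (space Q - D) x * (g x - h x) \<partial>Q)"
    using DQ by (intro Bochner_Integration.integral_diff int)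
  also have "\<dots> \<le> 4 * d"
    using integral_indicator_times_cond_prob01_diff_le[OF P Q sets_eq F X D(1) d]
      integral_indicator_times_cond_prob01_diff_le[OF P Q sets_eq F X D(2) d]
    unfolding g_def h_def by linarith
  finally show ?thesis by (simp add: g_def h_def)
qed

lemma abs_diff_mult_le:
  fixes p1 p2 p3 q1 q2 q3 :: real
  assumes "\<bar>p1\<bar> \<le> 1" "\<bar>q2\<bar> \<le> 1"
  shows "\<bar>q3 - q1 * q2\<bar> \<le> \<bar>q3 - p3\<bar> + \<bar>p3 - p1 * p2\<bar> + \<bar>p1 - q1\<bar> + \<bar>p2 - q2\<bar>"
proof -
  have "\<bar>p1 * (p2 - q2)\<bar> \<le> \<bar>p2 - q2\<bar>" "\<bar>(p1 - q1) * q2\<bar> \<le> \<bar>p1 - q1\<bar>"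
    unfolding abs_mult using assms by (simp_all add: mult_left_le_one_le mult_right_le_one_le)
  moreover have "p1 * p2 - q1 * q2 = p1 * (p2 - q2) + (p1 - q1) * q2" by (simp add: algebra_simps)
  ultimately show ?thesis by linarith
qed

lemma abs_diff_mult_le_1:
  fixes a b c :: real
  assumes "0 \<le> a" "a \<le> 1" "0 \<le> b" "b \<le> 1" "0 \<le> c" "c \<le> 1"
  shows "\<bar>c - a * b\<bar> \<le> 1"
proof -
  have "0 \<le> a * b" "a * b \<le> 1" using assms by (simp_all add: mult_le_one)
  then show ?thesis using assms unfolding abs_le_iff by linarith
qed

lemma integral_cond_indep_defect_of_tv_le:
  assumes P: "prob_space P" and Q: "prob_space Q" and sets_eq: "sets P = sets Q"
    and F: "subalgebra Q F" and X: "X1 \<in> sets Q" "X2 \<in> sets Q" "X3 \<in> sets Q"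
    and indep_P: "AE x in P. cond_prob P F X3 x = cond_prob P F X1 x * cond_prob P F X2 x"
    and d: "\<And>C. C \<in> sets Q \<Longrightarrow> \<bar>measure P C - measure Q C\<bar> \<le> d"
  shows "(\<integral>x. \<bar>cond_prob01 P F X3 x - cond_prob01 P F X1 x * cond_prob01 P F X2 x\<bar> \<partial>Q) \<le> d"
proof -
  define p where "p = cond_prob01 P F"
  define m where "m x = \<bar>p X3 x - p X1 x * p X2 x\<bar>" for x
  have FP: "subalgebra P F" using sets_eq F by (rule subalgebra_cong_sets)
  have XP: "X1 \<in> sets P" "X2 \<in> sets P" "X3 \<in> sets P" using X sets_eq by simp_all
  have "p Y \<in> borel_measurable Q" for Y
    unfolding p_def by (simp add: measurable_from_subalg[OF F])
  then have "m \<in> borel_measurable Q" unfolding m_def by measurable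
  have "AE x in P. m x = 0"
    using AE_cond_prob01_eq[OF P FP XP(1)] AE_cond_prob01_eq[OF P FP XP(2)]
      AE_cond_prob01_eq[OF P FP XP(3)] indep_P
    by eventually_elim (simp add: m_def p_def)
  then have "(\<integral>x. m x \<partial>P) = 0"
    by (simp add: integral_eq_zero_AE)
  moreover have "\<bar>(\<integral>x. m x \<partial>P) - (\<integral>x. m x \<partial>Q)\<bar> \<le> d"
    using \<open>m \<in> borel_measurable Q\<close>
    by (rule integral_diff_le_of_measure_diff_le[OF P Q sets_eq _ _ d]) (simp add: m_def p_def abs_diff_mult_le_1)
  ultimately show ?thesis by (simp add: m_def p_def)
qed

lemma integral_cond_indep_defect_le:
  assumes P: "prob_space P" and Q: "prob_space Q" and sets_eq: "sets P = sets Q"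
    and F: "subalgebra Q F" and X: "X1 \<in> sets Q" "X2 \<in> sets Q" "X3 \<in> sets Q"
    and indep_P: "AE x in P. cond_prob P F X3 x = cond_prob P F X1 x * cond_prob P F X2 x"
    and d: "\<And>C. C \<in> sets Q \<Longrightarrow> \<bar>measure P C - measure Q C\<bar> \<le> d"
  shows "(\<integral>x. \<bar>cond_prob01 Q F X3 x - cond_prob01 Q F X1 x * cond_prob01 Q F X2 x\<bar> \<partial>Q) \<le> 13 * d"
proof -
  interpret Q: prob_space Q by fact
  define p where "p = cond_prob01 P F"
  define q where "q = cond_prob01 Q F"
  have [measurable]: "p Y \<in> borel_measurable Q" "q Y \<in> borel_measurable Q" for Y
    unfolding p_def q_def by (simp_all add: measurable_from_subalg[OF F])
  have bounds: "0 \<le> p Y x" "p Y x \<le> 1" "0 \<le> q Y x" "q Y x \<le> 1" for Y x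
    by (simp_all add: p_def q_def)
  have int: "integrable Q f" if "f \<in> borel_measurable Q" "\<And>x. \<bar>f x\<bar> \<le> 1" for f :: "_ \<Rightarrow> real"
    using that by (intro Q.integrable_const_bound[where B=1] AE_I2) auto
  have "\<bar>\<bar>p Y x - q Y x\<bar>\<bar> \<le> 1" for Y x using bounds[of Y x] by linarith
  then have int_pq: "integrable Q (\<lambda>x. \<bar>p Y x - q Y x\<bar>)" for Y by (intro int) simp_all
  have close: "(\<integral>x. \<bar>p Y x - q Y x\<bar> \<partial>Q) \<le> 4 * d" if "Y \<in> sets Q" for Y
    unfolding p_def q_def by (rule integral_abs_cond_prob01_diff_le[OF P Q sets_eq F that d])
  define m where "m x = \<bar>p X3 x - p X1 x * p X2 x\<bar>" for x
  have int_m: "integrable Q m"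
    unfolding m_def using bounds by (intro int) (simp_all add: abs_diff_mult_le_1)
  have m_le: "(\<integral>x. m x \<partial>Q) \<le> d"
    unfolding m_def p_def by (rule integral_cond_indep_defect_of_tv_le[OF P Q sets_eq F X indep_P d])
  have "(\<integral>x. \<bar>q X3 x - q X1 x * q X2 x\<bar> \<partial>Q)
          \<le> (\<integral>x. \<bar>p X3 x - q X3 x\<bar> + m x + \<bar>p X1 x - q X1 x\<bar> + \<bar>p X2 x - q X2 x\<bar> \<partial>Q)"
  proof (rule integral_mono)
    show "integrable Q (\<lambda>x. \<bar>q X3 x - q X1 x * q X2 x\<bar>)"
      using bounds by (intro int) (simp_all add: abs_diff_mult_le_1)
    show "integrable Q (\<lambda>x. \<bar>p X3 x - q X3 x\<bar> + m x + \<bar>p X1 x - q X1 x\<bar> + \<bar>p X2 x - q X2 x\<bar>)"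
      by (intro Bochner_Integration.integrable_add int_pq int_m)
    fix x
    have "\<bar>p X1 x\<bar> \<le> 1" "\<bar>q X2 x\<bar> \<le> 1"
      using bounds[of X1 x] bounds[of X2 x] by simp_all
    then show "\<bar>q X3 x - q X1 x * q X2 x\<bar>
                 \<le> \<bar>p X3 x - q X3 x\<bar> + m x + \<bar>p X1 x - q X1 x\<bar> + \<bar>p X2 x - q X2 x\<bar>"
      using abs_diff_mult_le[of "p X1 x" "q X2 x" "q X3 x" "q X1 x" "p X3 x" "p X2 x"]
      by (simp add: m_def abs_minus_commute)
  qed
  also have "\<dots> = (\<integral>x. \<bar>p X3 x - q X3 x\<bar> \<partial>Q) + (\<integral>x. m x \<partial>Q)
                  + (\<integral>x. \<bar>p X1 x - q X1 x\<bar> \<partial>Q) + (\<integral>x. \<bar>p X2 x - q X2 x\<bar> \<partial>Q)"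
    using int_pq int_m by simp
  also have "\<dots> \<le> 13 * d"
    using close[OF X(1)] close[OF X(2)] close[OF X(3)] m_le by linarith
  finally show ?thesis unfolding q_def .
qed

lemma measure_diff_le_SUP:
  assumes "prob_space P" "prob_space Q" "C \<in> sets Q"
  shows "\<bar>measure P C - measure Q C\<bar> \<le> (SUP C\<in>sets Q. \<bar>measure P C - measure Q C\<bar>)"
proof (rule cSUP_upper[OF assms(3)])
  have "\<bar>measure P C - measure Q C\<bar> \<le> 1" for C
    using prob_space.prob_le_1[OF assms(1), of C] prob_space.prob_le_1[OF assms(2), of C]
      measure_nonneg[of P C] measure_nonneg[of Q C] by linarith
  then show "bdd_above ((\<lambda>C. \<bar>measure P C - measure Q C\<bar>) ` sets Q)" by (intro bdd_aboveI2)
qed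

lemma AE_cond_indep_events_of_tv_converges:
  fixes P :: "nat \<Rightarrow> 'a measure"
  assumes P: "\<And>n. prob_space (P n)" and sets_eq: "\<And>n. sets (P n) = sets Q" and Q: "prob_space Q"
    and F: "subalgebra Q F" and X: "X1 \<in> sets Q" "X2 \<in> sets Q" "X3 \<in> sets Q"
    and indep_P: "\<And>n. AE x in P n. cond_prob (P n) F X3 x = cond_prob (P n) F X1 x * cond_prob (P n) F X2 x"
    and tv: "tv_converges P Q"
  shows "AE x in Q. cond_prob Q F X3 x = cond_prob Q F X1 x * cond_prob Q F X2 x"
proof -
  interpret Q: prob_space Q by fact
  define defect where "defect x = \<bar>cond_prob01 Q F X3 x - cond_prob01 Q F X1 x * cond_prob01 Q F X2 x\<bar>" for x
  define d where "d n = (SUP C\<in>sets Q. \<bar>measure (P n) C - measure Q C\<bar>)" for n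
  have defect_le: "(\<integral>x. defect x \<partial>Q) \<le> 13 * d n" for n
    unfolding defect_def d_def
    by (rule integral_cond_indep_defect_le[OF P Q sets_eq F X indep_P measure_diff_le_SUP[OF P Q]])
  have "(\<lambda>n. 13 * d n) \<longlonglongrightarrow> 0"
    using tv unfolding tv_converges_def d_def by (intro tendsto_mult_right_zero)
  then have "(\<integral>x. defect x \<partial>Q) \<le> 0"
    by (rule LIMSEQ_le_const) (use defect_le in blast)
  moreover have "0 \<le> (\<integral>x. defect x \<partial>Q)"
    by (intro integral_nonneg_AE) (simp add: defect_def)
  ultimately have integral_0: "(\<integral>x. defect x \<partial>Q) = 0" by linarith
  have "integrable Q defect"
  proof (rule Q.integrable_const_bound[where B=1])
    show "AE x in Q. norm (defect x) \<le> 1"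
      by (intro AE_I2) (simp add: defect_def abs_diff_mult_le_1)
    have [measurable]: "cond_prob01 Q F X \<in> borel_measurable Q" for X
      by (rule measurable_from_subalg[OF F]) simp
    show "defect \<in> borel_measurable Q" unfolding defect_def by measurable
  qed
  then have "AE x in Q. defect x = 0"
    using integral_0 by (subst (asm) integral_nonneg_eq_0_iff_AE) (simp_all add: defect_def)
  then show ?thesis
    using AE_cond_prob01_eq[OF Q F X(1)] AE_cond_prob01_eq[OF Q F X(2)] AE_cond_prob01_eq[OF Q F X(3)]
    by eventually_elim (simp add: defect_def)
qed

lemma cond_indep_closed_under_tv_converges:
  fixes P :: "nat \<Rightarrow> 'a measure"
  assumes P: "\<And>n. prob_space (P n)" and sets_eq: "\<And>n. sets (P n) = sets Q" and Q: "prob_space Q"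
    and S: "S \<in> measurable Q Ms" and W: "W \<in> measurable Q Mw" and Z: "Z \<in> measurable Q Mz"
    and indep_P: "\<And>n. cond_indep (P n) S Ms W Mw Z Mz" and tv: "tv_converges P Q"
  shows "cond_indep Q S Ms W Mw Z Mz"
  unfolding cond_indep_def
proof (intro ballI)
  fix A B assume A: "A \<in> sets Ms" and B: "B \<in> sets Mw"
  have space_eq: "space (P n) = space Q" for n using sets_eq by (rule sets_eq_imp_space_eq)
  define F where "F = vimage_algebra (space Q) Z Mz"
  have F: "subalgebra Q F" unfolding subalgebra_def F_def using sets_image_in_sets[OF refl Z] by simp
  have SA: "S -` A \<inter> space Q \<in> sets Q" and WB: "W -` B \<inter> space Q \<in> sets Q"
    using measurable_sets[OF S A] measurable_sets[OF W B] .
  have "S -` A \<inter> W -` B \<inter> space Q = (S -` A \<inter> space Q) \<inter> (W -` B \<inter> space Q)" by blast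
  with SA WB have SAWB: "S -` A \<inter> W -` B \<inter> space Q \<in> sets Q" by simp
  show "AE x in Q. cond_prob Q F (S -` A \<inter> W -` B \<inter> space Q) x
          = cond_prob Q F (S -` A \<inter> space Q) x * cond_prob Q F (W -` B \<inter> space Q) x"
    using indep_P A B unfolding cond_indep_def space_eq F_def[symmetric]
    by (intro AE_cond_indep_events_of_tv_converges[OF P sets_eq Q F SA WB SAWB _ tv]) blast
qed

theorem mainTheorem9:
  fixes Ms :: "'s measure" and Mw :: "'w measure" and Mz :: "'z measure"
    and P :: "nat \<Rightarrow> ('s \<times> 'w \<times> 'z) measure" and Q :: "('s \<times> 'w \<times> 'z) measure"
  defines "\<Omega> \<equiv> Ms \<Otimes>\<^sub>M (Mw \<Otimes>\<^sub>M Mz)"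
  assumes "\<And>n. P n \<in> prob_measures \<Omega>"
    and "\<And>n. cond_indep (P n) fst Ms (fst \<circ> snd) Mw (snd \<circ> snd) Mz"
    and "Q \<in> prob_measures \<Omega>"
    and "tv_converges P Q"
  shows "cond_indep Q fst Ms (fst \<circ> snd) Mw (snd \<circ> snd) Mz"
proof -
  have sets_Q: "sets Q = sets \<Omega>" and Q: "prob_space Q"
    using assms(4) by (simp_all add: prob_measures_def)
  have P: "prob_space (P n)" and sets_P: "sets (P n) = sets Q" for n
    using assms(2)[of n] sets_Q by (simp_all add: prob_measures_def)
  have "fst \<in> measurable Q Ms" "fst \<circ> snd \<in> measurable Q Mw" "snd \<circ> snd \<in> measurable Q Mz"
    unfolding measurable_cong_sets[OF sets_Q refl] \<Omega>_def by measurable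
  then show ?thesis
    by (rule cond_indep_closed_under_tv_converges[OF P sets_P Q _ _ _ assms(3,5)])
qed

end
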